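(* Let $V\subset\mathbb{R}^d$ be a finite antichain, $p\in S_V$, and $v\in D_p$ with $p_i=v_i$. Then $v$ is an $i$-witness for $p$ if and only if there is no minimum $w\in V$ such that $w_i<v_i=p_i$ and, for every $j\neq i$, either $w_j\le v_j$ or $w_j<p_j$.
   Context: For $x,y\in\mathbb{R}^d$, $x\le y$ (dominance order) means $x_i\le y_i$ for all $i$; $y\rhd x$ means $y_i>x_i$ for all $i$; $y\rhd_i x$ means $y_i=x_i$ and $y_j>x_j$ for all $j\neq i$. $V\subset\mathbb{R}^d$ is a finite antichain in the dominance order (elements are called minima). The orthogonal surface $S_V$ is the topological boundary of $\langle V\rangle=\{x: x\ge v\text{ for some }v\in V\}$; equivalently $p\in S_V$ iff there is $v\in V$ with $v\le p$ and no $w\in V$ with $p\rhd w$. For $p\in S_V$, $D_p=\{v\in V:v\le p\}$. For $p\in S_V$, a minimum $v\in D_p$ is an $i$-witness for $p$ if there is $q\in S_V$ with $v\le p\le q$ and $q\rhd_i v$. *)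

theory Defs
  imports "HOL-Analysis.Analysis"
begin

definition dom_le :: "real^'d \<Rightarrow> real^'d \<Rightarrow> bool" where
  "dom_le x y \<longleftrightarrow> (\<forall>i. x $ i \<le> y $ i)"

definition dom_gt :: "real^'d \<Rightarrow> real^'d \<Rightarrow> bool" where
  "dom_gt y x \<longleftrightarrow> (\<forall>i. y $ i > x $ i)"

definition dom_gt_i :: "real^'d \<Rightarrow> 'd \<Rightarrow> real^'d \<Rightarrow> bool" where
  "dom_gt_i y i x \<longleftrightarrow> y $ i = x $ i \<and> (\<forall>j. j \<noteq> i \<longrightarrow> y $ j > x $ j)"

definition finite_antichain :: "(real^'d) set \<Rightarrow> bool" where
  "finite_antichain V \<longleftrightarrow> finite V \<and> (\<forall>v\<in>V. \<forall>w\<in>V. dom_le v w \<longrightarrow> v = w)"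

definition orth_surface :: "(real^'d) set \<Rightarrow> (real^'d) set" where
  "orth_surface V = {p. (\<exists>v\<in>V. dom_le v p) \<and> \<not> (\<exists>w\<in>V. dom_gt p w)}"

definition D_set :: "(real^'d) set \<Rightarrow> real^'d \<Rightarrow> (real^'d) set" where
  "D_set V p = {v\<in>V. dom_le v p}"

definition is_witness :: "(real^'d) set \<Rightarrow> 'd \<Rightarrow> real^'d \<Rightarrow> real^'d \<Rightarrow> bool" where
  "is_witness V i p v \<longleftrightarrow> v \<in> D_set V p \<and>
     (\<exists>q\<in>orth_surface V. dom_le v p \<and> dom_le p q \<and> dom_gt_i q i v)"

end

theory Submission
  imports Defs
begin

text \<open>Call \<open>w \<in> V\<close> a blocker if \<open>w\<^sub>i < v\<^sub>i\<close> and \<open>w\<^sub>j \<le> v\<^sub>j\<close> or \<open>w\<^sub>j < p\<^sub>j\<close> for all \<open>j \<noteq> i\<close>.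
  A blocker lies strictly below every \<open>q \<ge> p\<close> with \<open>q \<rhd>\<^sub>i v\<close>, so no such \<open>q\<close> lies on
  the surface. Conversely, fix \<open>e > 0\<close> below every positive gap \<open>w\<^sub>j - v\<^sub>j\<close> (\<open>w \<in> V\<close>) and
  raise each coordinate \<open>j \<noteq> i\<close> of \<open>p\<close> to at least \<open>v\<^sub>j + e\<close>: a minimum strictly dominated by
  the raised point satisfies \<open>w\<^sub>j < p\<^sub>j\<close> or \<open>w\<^sub>j < v\<^sub>j + e\<close>, hence \<open>w\<^sub>j \<le> v\<^sub>j\<close>, and is a blocker.\<close>

lemma dom_gt_if_blocker:
  assumes "dom_le p q" and "dom_gt_i q i v"
    and "w $ i < v $ i" and "\<forall>j. j \<noteq> i \<longrightarrow> w $ j \<le> v $ j \<or> w $ j < p $ j"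
  shows "dom_gt q w"
  unfolding dom_gt_def
proof
  fix j
  show "w $ j < q $ j"
  proof (cases "j = i")
    case True
    then show ?thesis using assms(2,3) by (simp add: dom_gt_i_def)
  next
    case False
    then have "v $ j < q $ j" "p $ j \<le> q $ j"
      using assms(1,2) by (auto simp: dom_le_def dom_gt_i_def)
    then show ?thesis using assms(4) False by fastforce
  qed
qed

lemma finite_uniform_gap:
  fixes V :: "(real^'d) set"
  assumes "finite V"
  obtains e where "e > 0" "\<And>w j. w \<in> V \<Longrightarrow> v $ j < w $ j \<Longrightarrow> v $ j + e \<le> w $ j"
proof
  define G where "G = insert 1 {w $ j - v $ j | w j. w \<in> V \<and> v $ j < w $ j}"
  have "G \<subseteq> insert 1 ((\<lambda>(w, j). w $ j - v $ j) ` (V \<times> UNIV))"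
    unfolding G_def by auto
  then have "finite G"
    by (rule finite_subset) (use assms in auto)
  moreover have "\<forall>x\<in>G. x > 0"
    unfolding G_def by auto
  ultimately show "Min G > 0"
    unfolding G_def by simp
  fix w j
  assume "w \<in> V" "v $ j < w $ j"
  then have "w $ j - v $ j \<in> G"
    unfolding G_def by blast
  then show "v $ j + Min G \<le> w $ j"
    using Min_le[OF \<open>finite G\<close>] by fastforce
qed

lemma is_witness_if_no_blocker:
  fixes V :: "(real^'d) set" and p v :: "real^'d" and i :: 'd
  assumes "e > 0" and gap: "\<And>w j. w \<in> V \<Longrightarrow> v $ j < w $ j \<Longrightarrow> v $ j + e \<le> w $ j"
    and "v \<in> D_set V p" and "p $ i = v $ i"
    and no_blocker: "\<not> (\<exists>w\<in>V. w $ i < v $ i \<and> (\<forall>j. j \<noteq> i \<longrightarrow> w $ j \<le> v $ j \<or> w $ j < p $ j))"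
  shows "is_witness V i p v"
proof -
  define q :: "real^'d" where "q = (\<chi> j. if j = i then v $ i else max (p $ j) (v $ j + e))"
  have q_i: "q $ i = v $ i" and q_j: "\<And>j. j \<noteq> i \<Longrightarrow> q $ j = max (p $ j) (v $ j + e)"
    by (simp_all add: q_def)
  have "v \<in> V" "dom_le v p"
    using assms(3) by (auto simp: D_set_def)
  have "dom_le p q"
    unfolding dom_le_def using q_i q_j \<open>p $ i = v $ i\<close> by (metis max.cobounded1 order_refl)
  have "dom_gt_i q i v"
    using q_i q_j \<open>e > 0\<close> by (simp add: dom_gt_i_def less_max_iff_disj)
  have "\<not> dom_gt q w" if "w \<in> V" for w
  proof
    assume "dom_gt q w"
    then have below: "\<And>j. w $ j < q $ j"
      by (simp add: dom_gt_def)
    then have "w $ i < v $ i"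
      using q_i by metis
    moreover have "w $ j \<le> v $ j \<or> w $ j < p $ j" if "j \<noteq> i" for j
    proof -
      have "w $ j < p $ j \<or> w $ j < v $ j + e"
        using below[of j] q_j[OF \<open>j \<noteq> i\<close>] by (simp add: less_max_iff_disj)
      then show ?thesis
        using gap[OF \<open>w \<in> V\<close>, of j] by linarith
    qed
    ultimately show False
      using no_blocker \<open>w \<in> V\<close> by blast
  qed
  moreover have "dom_le v q"
    using \<open>dom_le v p\<close> \<open>dom_le p q\<close> unfolding dom_le_def by (meson order_trans)
  ultimately have "q \<in> orth_surface V"
    using \<open>v \<in> V\<close> unfolding orth_surface_def by blast
  then show ?thesis
    unfolding is_witness_def
    using assms(3) \<open>dom_le v p\<close> \<open>dom_le p q\<close> \<open>dom_gt_i q i v\<close> by blast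
qed

theorem corollary4p4:
  fixes V :: "(real^'d) set" and p v :: "real^'d" and i :: 'd
  assumes "finite_antichain V"
    and "p \<in> orth_surface V"
    and "v \<in> D_set V p"
    and "p $ i = v $ i"
  shows "is_witness V i p v \<longleftrightarrow>
    \<not> (\<exists>w\<in>V. w $ i < v $ i \<and> (\<forall>j. j \<noteq> i \<longrightarrow> w $ j \<le> v $ j \<or> w $ j < p $ j))"
proof
  assume "is_witness V i p v"
  then obtain q where "q \<in> orth_surface V" "dom_le p q" "dom_gt_i q i v"
    unfolding is_witness_def by blast
  then show "\<not> (\<exists>w\<in>V. w $ i < v $ i \<and> (\<forall>j. j \<noteq> i \<longrightarrow> w $ j \<le> v $ j \<or> w $ j < p $ j))"
    using dom_gt_if_blocker unfolding orth_surface_def by blast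
next
  assume "\<not> (\<exists>w\<in>V. w $ i < v $ i \<and> (\<forall>j. j \<noteq> i \<longrightarrow> w $ j \<le> v $ j \<or> w $ j < p $ j))"
  moreover obtain e where "e > 0" "\<And>w j. w \<in> V \<Longrightarrow> v $ j < w $ j \<Longrightarrow> v $ j + e \<le> w $ j"
    using finite_uniform_gap assms(1) unfolding finite_antichain_def by blast
  ultimately show "is_witness V i p v"
    using is_witness_if_no_blocker assms(3,4) by blast
qed

end
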